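(* There is a positive absolute constant $C_0$ such that whenever $n\geq 2$, $D$ is a domain in $\mathbb{R}^n$ such that $\mathbb{R}^n\setminus D$ contains at least two points, and $z\in D$, we have $$\lambda''_D(z)\leq\lambda'_D(z)\leq\lambda_D(z)\leq C_0\,\lambda''_D(z)$$ and $$\lambda_D(z)\leq\frac{1}{d(z,\partial D)}.$$
   Context: Write $d(z,\partial D)=\inf\{|z-a|:a\in\partial D\}$ and $Q(z;a,b)=|z-a|\big(1+\big|\log\frac{|a-b|}{|z-a|}\big|\big)$ (equal to $+\infty$ when $a=b$). For $z\in D$ define $1/\lambda_D(z)=\inf\{Q(z;a,b): a,b\in\mathbb{R}^n\setminus D\}$, $1/\lambda'_D(z)=\inf\{Q(z;a,b): a,b\in\partial D\}$, $1/\lambda''_D(z)=\inf\{Q(z;a,b): a,b\in\partial D,\ |z-a|=d(z,\partial D)\}$. *)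

theory Defs
  imports "HOL-Analysis.Analysis"
begin

text \<open>Euclidean n-space R^n, realised as the real sequences vanishing from index n on,
  with the Euclidean distance. This allows the dimension n to be quantified inside
  the statement (after the absolute constant).\<close>

definition Rn :: "nat \<Rightarrow> (nat \<Rightarrow> real) set" where
  "Rn n = {x. \<forall>i\<ge>n. x i = 0}"

definition distn :: "nat \<Rightarrow> (nat \<Rightarrow> real) \<Rightarrow> (nat \<Rightarrow> real) \<Rightarrow> real" where
  "distn n x y = sqrt (\<Sum>i<n. (x i - y i)\<^sup>2)"

definition topn :: "nat \<Rightarrow> (nat \<Rightarrow> real) topology" where
  "topn n = Metric_space.mtopology (Rn n) (distn n)"

definition domain_n :: "nat \<Rightarrow> (nat \<Rightarrow> real) set \<Rightarrow> bool" where
  "domain_n n D \<longleftrightarrow> D \<noteq> {} \<and> openin (topn n) D \<and> connectedin (topn n) D"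

definition bdry :: "nat \<Rightarrow> (nat \<Rightarrow> real) set \<Rightarrow> (nat \<Rightarrow> real) set" where
  "bdry n D = (topn n) frontier_of D"

definition dbd :: "nat \<Rightarrow> (nat \<Rightarrow> real) set \<Rightarrow> (nat \<Rightarrow> real) \<Rightarrow> real" where
  "dbd n D z = Inf {distn n z a | a. a \<in> bdry n D}"

definition Qn :: "nat \<Rightarrow> (nat \<Rightarrow> real) \<Rightarrow> (nat \<Rightarrow> real) \<Rightarrow> (nat \<Rightarrow> real) \<Rightarrow> ereal" where
  "Qn n z a b = (if a = b then \<infinity>
      else ereal (distn n z a * (1 + \<bar>ln (distn n a b / distn n z a)\<bar>)))"

definition lam :: "nat \<Rightarrow> (nat \<Rightarrow> real) set \<Rightarrow> (nat \<Rightarrow> real) \<Rightarrow> ereal" where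
  "lam n D z = inverse (Inf {Qn n z a b | a b. a \<in> Rn n - D \<and> b \<in> Rn n - D})"

definition lam' :: "nat \<Rightarrow> (nat \<Rightarrow> real) set \<Rightarrow> (nat \<Rightarrow> real) \<Rightarrow> ereal" where
  "lam' n D z = inverse (Inf {Qn n z a b | a b. a \<in> bdry n D \<and> b \<in> bdry n D})"

definition lam'' :: "nat \<Rightarrow> (nat \<Rightarrow> real) set \<Rightarrow> (nat \<Rightarrow> real) \<Rightarrow> ereal" where
  "lam'' n D z = inverse (Inf {Qn n z a b | a b. a \<in> bdry n D \<and> b \<in> bdry n D
                                  \<and> distn n z a = dbd n D z})"

end

theory Submission
  imports Defs
begin

(* Let a0 be a boundary point nearest to z, so |z - a0| = d = d(z, \<partial>D). A pair a \<noteq> b of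
   exterior points can be traded for a pair (a0, b') of boundary points at the cost of a factor 3
   in Q. Let c be whichever of a, b is farther from a0 and \<rho> = |a0 - c|; with r = |z - a| \<ge> d
   and s = |a - b| the triangle inequality gives s/2 \<le> \<rho> \<le> 2r + s. Moving on the sphere
   |x - a0| = d from z towards the direction of c (along a great circle, which needs n \<ge> 2) and
   then radially out to c, the path leaves D at a boundary point b' with |a0 - b'| between d and \<rho>,
   and an elementary estimate of logarithms gives Q(z; a0, b') \<le> 3 Q(z; a, b). So \<lambda> \<le> 3 \<lambda>'';
   the other inequalities follow from monotonicity of infima and Q(z; a, b) \<ge> |z - a| \<ge> d. *)

section \<open>Euclidean structure of \<open>Rn n\<close>\<close>

lemma distn_nonneg: "0 \<le> distn n x y"
  by (simp add: distn_def sum_nonneg)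

lemma distn_commute: "distn n x y = distn n y x"
  unfolding distn_def by (simp add: power2_commute)

lemma distn_self [simp]: "distn n x x = 0"
  by (simp add: distn_def)

lemma distn_triangle: "distn n x z \<le> distn n x y + distn n y z"
proof -
  have "distn n x z = L2_set (\<lambda>i. (x i - y i) + (y i - z i)) {..<n}"
    by (simp add: distn_def L2_set_def)
  also have "\<dots> \<le> distn n x y + distn n y z"
    unfolding distn_def L2_set_def[symmetric] by (rule L2_set_triangle_ineq)
  finally show ?thesis .
qed

lemma distn_eq_0_iff:
  assumes "x \<in> Rn n" "y \<in> Rn n"
  shows "distn n x y = 0 \<longleftrightarrow> x = y"
proof
  assume "distn n x y = 0"
  then have "\<forall>i<n. x i = y i"
    by (simp add: distn_def sum_nonneg_eq_0_iff)
  moreover have "\<forall>i\<ge>n. x i = y i"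
    using assms by (simp add: Rn_def)
  ultimately show "x = y"
    by (metis ext not_less)
qed simp

lemma Metric_space_Rn: "Metric_space (Rn n) (distn n)"
  by unfold_locales (auto simp: distn_nonneg distn_commute distn_eq_0_iff intro: distn_triangle)

lemma topspace_topn [simp]: "topspace (topn n) = Rn n"
  by (simp add: topn_def Metric_space.topspace_mtopology[OF Metric_space_Rn])

lemma closedin_bdry: "closedin (topn n) (bdry n D)"
  unfolding bdry_def by (rule closedin_frontier_of)

lemma bdry_subset_Rn: "bdry n D \<subseteq> Rn n"
  unfolding bdry_def by (metis frontier_of_subset_topspace topspace_topn)

lemma bdry_subset_compl:
  assumes "openin (topn n) D"
  shows "bdry n D \<subseteq> Rn n - D"
proof -
  have "bdry n D \<inter> D = {}"
    using assms by (auto simp: bdry_def frontier_of_openin)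
  then show ?thesis using bdry_subset_Rn by blast
qed

lemma abs_coord_le_distn: "i < n \<Longrightarrow> \<bar>x i - y i\<bar> \<le> distn n x y"
  unfolding distn_def real_sqrt_abs[symmetric]
  by (intro real_sqrt_le_mono member_le_sum) auto

lemma distn_ray: "distn n a (\<lambda>i. a i + t * u i) = \<bar>t\<bar> * sqrt (\<Sum>i<n. (u i)\<^sup>2)"
proof -
  have "distn n a (\<lambda>i. a i + t * u i) = sqrt (t\<^sup>2 * (\<Sum>i<n. (u i)\<^sup>2))"
    unfolding distn_def sum_distrib_left by (simp add: power_mult_distrib)
  then show ?thesis by (simp add: real_sqrt_mult)
qed

lemma distn_tendsto:
  assumes "\<forall>i<n. (\<lambda>k. x k i) \<longlonglongrightarrow> x0 i" "\<forall>i<n. (\<lambda>k. y k i) \<longlonglongrightarrow> y0 i"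
  shows "(\<lambda>k. distn n (x k) (y k)) \<longlonglongrightarrow> distn n x0 y0"
  unfolding distn_def using assms by (intro tendsto_intros) auto

lemma continuous_map_topn:
  fixes \<gamma> :: "'a::metric_space \<Rightarrow> nat \<Rightarrow> real"
  assumes "\<forall>t\<in>S. \<gamma> t \<in> Rn n" and "\<forall>i<n. continuous_on S (\<lambda>t. \<gamma> t i)"
  shows "continuous_map (top_of_set S) (topn n) \<gamma>"
  unfolding topn_def Metric_space.continuous_map_to_metric[OF Metric_space_Rn]
proof (intro ballI allI impI)
  fix x e assume x: "x \<in> topspace (top_of_set S)" and e: "(e::real) > 0"
  have "continuous_on S (\<lambda>s. distn n (\<gamma> s) (\<gamma> x))"
    unfolding distn_def using assms(2) by (intro continuous_intros) auto
  then obtain r where r: "r > 0" "\<forall>s\<in>S. dist s x < r \<longrightarrow> distn n (\<gamma> s) (\<gamma> x) < e"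
    using x e by (fastforce simp: continuous_on_iff dist_real_def distn_nonneg)
  show "\<exists>U. openin (top_of_set S) U \<and> x \<in> U \<and>
      (\<forall>y\<in>U. \<gamma> y \<in> Metric_space.mball (Rn n) (distn n) (\<gamma> x) e)"
  proof (intro exI conjI)
    show "openin (top_of_set S) (S \<inter> ball x r)" by (simp add: openin_open_Int)
  qed (use x r assms(1) in \<open>auto simp: Metric_space.in_mball[OF Metric_space_Rn] distn_commute dist_commute\<close>)
qed

lemma path_meets_bdry:
  fixes \<gamma> :: "real \<Rightarrow> nat \<Rightarrow> real"
  assumes "\<forall>t\<in>{0..1}. \<gamma> t \<in> Rn n" and "\<forall>i<n. continuous_on {0..1} (\<lambda>t. \<gamma> t i)"
    and "\<gamma> 0 \<in> D" and "\<gamma> 1 \<notin> D"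
  shows "\<exists>t\<in>{0..1}. \<gamma> t \<in> bdry n D"
proof -
  have connected: "connectedin (topn n) (\<gamma> ` {0..1})"
    using continuous_map_topn[OF assms(1,2)]
    by (intro connectedin_continuous_map_image) (auto simp: connectedin_subtopology connectedin_iff_connected)
  have "\<gamma> 0 \<in> \<gamma> ` {0..1}" "\<gamma> 1 \<in> \<gamma> ` {0..1}"
    by auto
  then have "\<gamma> ` {0..1} \<inter> D \<noteq> {}" "\<gamma> ` {0..1} - D \<noteq> {}"
    using assms(3,4) by blast+
  with connected show ?thesis
    unfolding bdry_def using connectedin_Int_frontier_of by blast
qed

lemma segment_meets_bdry:
  assumes "x \<in> Rn n" "x \<in> D" "y \<in> Rn n" "y \<notin> D"
  shows "\<exists>b\<in>bdry n D. distn n x b \<le> distn n x y"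
proof -
  let ?g = "\<lambda>t::real. \<lambda>i. x i + t * (y i - x i)"
  have "\<forall>i<n. continuous_on {0..1} (\<lambda>t. ?g t i)"
    by (intro allI impI continuous_intros)
  then obtain t where t: "t \<in> {0..1}" "?g t \<in> bdry n D"
    using path_meets_bdry[of ?g n D] assms by (auto simp: Rn_def)
  have "distn n x (?g t) = \<bar>t\<bar> * distn n x y"
    by (simp add: distn_ray distn_def power2_commute)
  also have "\<dots> \<le> distn n x y"
    using t(1) by (intro mult_left_le_one_le) (auto simp: distn_nonneg)
  finally show ?thesis using t(2) by blast
qed

section \<open>Nearest boundary points\<close>

lemma coordinatewise_convergent_subseq:
  fixes f :: "nat \<Rightarrow> nat \<Rightarrow> real"
  assumes "\<And>k i. \<bar>f k i\<bar> \<le> B i"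
  shows "\<exists>\<sigma>. strict_mono \<sigma> \<and> (\<forall>i<m. convergent (\<lambda>k. f (\<sigma> k) i))"
proof (induction m)
  case 0
  show ?case by (rule exI[of _ id]) (simp add: strict_mono_def)
next
  case (Suc m)
  then obtain \<sigma> where \<sigma>: "strict_mono \<sigma>" "\<forall>i<m. convergent (\<lambda>k. f (\<sigma> k) i)"
    by blast
  have "bounded (range (\<lambda>k. f (\<sigma> k) m))"
    unfolding bounded_iff using assms by (auto intro!: exI[of _ "B m"])
  then obtain l \<tau> where \<tau>: "strict_mono (\<tau> :: nat \<Rightarrow> nat)" "((\<lambda>k. f (\<sigma> k) m) \<circ> \<tau>) \<longlonglongrightarrow> l"
    using bounded_imp_convergent_subsequence by blast
  have "convergent (\<lambda>k. f ((\<sigma> \<circ> \<tau>) k) i)" if "i < Suc m" for i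
  proof (cases "i < m")
    case True
    then have "convergent ((\<lambda>k. f (\<sigma> k) i) \<circ> \<tau>)"
      using \<sigma>(2) \<tau>(1) convergent_subseq_convergent by blast
    then show ?thesis by (simp add: comp_def)
  next
    case False
    then have "i = m" using that by simp
    then show ?thesis using \<tau>(2) by (auto simp: convergent_def comp_def)
  qed
  moreover have "strict_mono (\<sigma> \<circ> \<tau>)"
    using \<sigma>(1) \<tau>(1) strict_mono_o by blast
  ultimately show ?case by blast
qed

lemma Rn_bounded_convergent_subseq:
  fixes f :: "nat \<Rightarrow> nat \<Rightarrow> real"
  assumes "\<And>k. f k \<in> Rn n" and "\<And>k. distn n z (f k) \<le> B"
  shows "\<exists>\<sigma> a. strict_mono \<sigma> \<and> a \<in> Rn n \<and> (\<forall>i<n. (\<lambda>k. f (\<sigma> k) i) \<longlonglongrightarrow> a i)"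
proof -
  have bound: "\<bar>f k i\<bar> \<le> \<bar>z i\<bar> + B" for k i
  proof (cases "i < n")
    case True
    then show ?thesis using abs_coord_le_distn[OF True, of z "f k"] assms(2)[of k] by linarith
  next
    case False
    then show ?thesis using assms(1)[of k] order_trans[OF distn_nonneg assms(2)]
      by (simp add: Rn_def)
  qed
  then obtain \<sigma> where \<sigma>: "strict_mono \<sigma>" "\<forall>i<n. convergent (\<lambda>k. f (\<sigma> k) i)"
    using coordinatewise_convergent_subseq[of f "\<lambda>i. \<bar>z i\<bar> + B" n, OF bound] by blast
  define a where "a i = (if i < n then lim (\<lambda>k. f (\<sigma> k) i) else 0)" for i
  have "a \<in> Rn n" by (simp add: a_def Rn_def)
  moreover have "\<forall>i<n. (\<lambda>k. f (\<sigma> k) i) \<longlonglongrightarrow> a i"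
    using \<sigma>(2) by (simp add: a_def convergent_LIMSEQ_iff)
  ultimately show ?thesis using \<sigma>(1) by blast
qed

lemma dbd_le_distn_bdry: "a \<in> bdry n D \<Longrightarrow> dbd n D z \<le> distn n z a"
  unfolding dbd_def by (rule cInf_lower) (auto intro: bdd_belowI[of _ 0] simp: distn_nonneg)

lemma dbd_le_distn:
  assumes "openin (topn n) D" "z \<in> D" "c \<in> Rn n - D"
  shows "dbd n D z \<le> distn n z c"
proof -
  have "z \<in> Rn n" using assms(1,2) openin_subset by fastforce
  then obtain b where "b \<in> bdry n D" "distn n z b \<le> distn n z c"
    using segment_meets_bdry assms(2,3) by blast
  then show ?thesis using dbd_le_distn_bdry[of b n D z] by linarith
qed

lemma bdry_minimizing_seq:
  assumes "openin (topn n) D" "z \<in> D" "p \<in> Rn n - D"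
  shows "\<exists>f. (\<forall>k. f k \<in> bdry n D) \<and> (\<lambda>k. distn n z (f k)) \<longlonglongrightarrow> dbd n D z"
proof -
  define S where "S = {distn n z a | a. a \<in> bdry n D}"
  have "z \<in> Rn n" using assms(1,2) openin_subset by fastforce
  then have "S \<noteq> {}"
    using segment_meets_bdry assms(2,3) by (force simp: S_def)
  have "\<exists>a\<in>bdry n D. distn n z a < dbd n D z + inverse (real (Suc k))" for k
  proof -
    have "Inf S < dbd n D z + inverse (real (Suc k))" by (simp add: dbd_def S_def)
    then show ?thesis using cInf_lessD[OF \<open>S \<noteq> {}\<close>] by (auto simp: S_def)
  qed
  then obtain f where f: "\<And>k. f k \<in> bdry n D"
    "\<And>k. distn n z (f k) < dbd n D z + inverse (real (Suc k))"
    by metis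
  have "(\<lambda>k. distn n z (f k)) \<longlonglongrightarrow> dbd n D z"
    using dbd_le_distn_bdry[OF f(1)] less_imp_le[OF f(2)]
    by (intro tendsto_sandwich[OF _ _ tendsto_const LIMSEQ_inverse_real_of_nat_add]) auto
  with f(1) show ?thesis by blast
qed

lemma coordinatewise_limit_in_bdry:
  assumes "\<And>k. f k \<in> bdry n D" and "a \<in> Rn n" and "\<forall>i<n. (\<lambda>k. f k i) \<longlonglongrightarrow> a i"
  shows "a \<in> bdry n D"
proof (rule limitin_closedin[OF _ closedin_bdry])
  have "f k \<in> Rn n" for k
    using assms(1) bdry_subset_Rn by blast
  moreover have "(\<lambda>k. distn n (f k) a) \<longlonglongrightarrow> distn n a a"
    using assms(3) by (intro distn_tendsto) auto
  ultimately show "limitin (topn n) f a sequentially"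
    unfolding topn_def Metric_space.limitin_metric_dist_null[OF Metric_space_Rn]
    using assms(2) by (simp add: always_eventually)
qed (use assms(1) in auto)

lemma dbd_attained:
  assumes "openin (topn n) D" and "z \<in> D" and "p \<in> Rn n - D"
  shows "\<exists>a\<in>bdry n D. distn n z a = dbd n D z"
proof -
  obtain f where f: "\<And>k. f k \<in> bdry n D" and lim: "(\<lambda>k. distn n z (f k)) \<longlonglongrightarrow> dbd n D z"
    using bdry_minimizing_seq[OF assms] by blast
  obtain K where "\<And>k. distn n z (f k) \<le> K"
    using convergent_imp_Bseq[OF convergentI[OF lim]] by (metis BseqE abs_le_D1 real_norm_def)
  then obtain \<sigma> a where
    \<sigma>: "strict_mono \<sigma>" "a \<in> Rn n" "\<forall>i<n. (\<lambda>k. f (\<sigma> k) i) \<longlonglongrightarrow> a i"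
    using Rn_bounded_convergent_subseq[of f n z K] f bdry_subset_Rn by blast
  have "(\<lambda>k. distn n z (f (\<sigma> k))) \<longlonglongrightarrow> dbd n D z"
    using LIMSEQ_subseq_LIMSEQ[OF lim \<sigma>(1)] by (simp add: comp_def)
  moreover have "(\<lambda>k. distn n z (f (\<sigma> k))) \<longlonglongrightarrow> distn n z a"
    using \<sigma>(3) by (intro distn_tendsto) auto
  ultimately have "distn n z a = dbd n D z"
    using LIMSEQ_unique by blast
  moreover have "a \<in> bdry n D"
    using coordinatewise_limit_in_bdry[of "f \<circ> \<sigma>"] f \<sigma>(2,3) by simp
  ultimately show ?thesis by blast
qed

lemma dbd_pos:
  assumes "openin (topn n) D" "z \<in> D" "p \<in> Rn n - D"
  shows "0 < dbd n D z"
proof -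
  obtain a where a: "a \<in> bdry n D" "distn n z a = dbd n D z"
    using dbd_attained assms by blast
  have "z \<in> Rn n" using assms(1,2) openin_subset by fastforce
  moreover have "a \<in> Rn n - D" using a(1) bdry_subset_compl assms(1) by blast
  ultimately have "distn n z a \<noteq> 0" using distn_eq_0_iff assms(2) by blast
  then show ?thesis using a(2) distn_nonneg[of n z a] by linarith
qed

section \<open>Boundary points at controlled distance from a boundary point\<close>

lemma convex_comb_of_unit_vectors_eq_0:
  fixes u v :: "nat \<Rightarrow> real"
  assumes u: "(\<Sum>i<n. (u i)\<^sup>2) = 1" and v: "(\<Sum>i<n. (v i)\<^sup>2) = 1"
    and t: "0 \<le> t" "t \<le> 1" and zero: "(\<Sum>i<n. ((1 - t) * v i + t * u i)\<^sup>2) = 0"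
  shows "\<forall>i<n. u i = - v i"
proof -
  have comb: "\<forall>i<n. (1 - t) * v i + t * u i = 0"
    using zero by (simp add: sum_nonneg_eq_0_iff)
  have "(\<Sum>i<n. ((1 - t) * v i)\<^sup>2) = (\<Sum>i<n. (t * u i)\<^sup>2)"
  proof (rule sum.cong)
    fix i assume "i \<in> {..<n}"
    then have "(1 - t) * v i = - (t * u i)" using comb by (simp add: eq_neg_iff_add_eq_0)
    then show "((1 - t) * v i)\<^sup>2 = (t * u i)\<^sup>2" by simp
  qed simp
  then have "(1 - t)\<^sup>2 = t\<^sup>2"
    using u v by (simp add: power_mult_distrib sum_distrib_left[symmetric])
  then have "t = 1 / 2" by (simp add: power2_eq_square algebra_simps)
  show ?thesis
  proof (intro allI impI)
    fix i assume "i < n"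
    then have "v i + u i = 0"
      using comb \<open>t = 1 / 2\<close> by (simp add: field_simps)
    then show "u i = - v i" by linarith
  qed
qed

lemma sum_lessThan_eq_first_two:
  fixes f :: "nat \<Rightarrow> real"
  assumes "2 \<le> n" and "\<And>i. 2 \<le> i \<Longrightarrow> f i = 0"
  shows "(\<Sum>i<n. f i) = f 0 + f 1"
proof -
  have "(\<Sum>i<n. f i) = (\<Sum>i\<in>{0, 1}. f i)"
    by (rule sum.mono_neutral_right) (use assms in auto)
  then show ?thesis by simp
qed

lemma exists_orthogonal_unit_vector:
  fixes e :: "nat \<Rightarrow> real"
  assumes "2 \<le> n"
  shows "\<exists>w\<in>Rn n. (\<Sum>i<n. (w i)\<^sup>2) = 1 \<and> (\<Sum>i<n. e i * w i) = 0"
proof (cases "(e 0)\<^sup>2 + (e 1)\<^sup>2 = 0")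
  case True
  define w where "w i = (if i = 0 then 1 else 0 :: real)" for i :: nat
  have "w \<in> Rn n" using assms by (simp add: w_def Rn_def)
  moreover have "(\<Sum>i<n. (w i)\<^sup>2) = 1" "(\<Sum>i<n. e i * w i) = 0"
    using True by (subst sum_lessThan_eq_first_two[OF assms]; simp add: w_def)+
  ultimately show ?thesis by blast
next
  case False
  define L where "L = sqrt ((e 0)\<^sup>2 + (e 1)\<^sup>2)"
  have "0 < (e 0)\<^sup>2 + (e 1)\<^sup>2"
    using False by (simp add: order_less_le add_nonneg_nonneg)
  then have L: "0 < L" "L\<^sup>2 = (e 0)\<^sup>2 + (e 1)\<^sup>2"
    by (simp_all add: L_def)
  define w where "w i = (if i = 0 then - e 1 / L else if i = 1 then e 0 / L else 0)" for i :: nat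
  have "w \<in> Rn n" using assms by (simp add: w_def Rn_def)
  moreover have "(\<Sum>i<n. (w i)\<^sup>2) = ((e 0)\<^sup>2 + (e 1)\<^sup>2) / L\<^sup>2"
    by (subst sum_lessThan_eq_first_two[OF assms]) (auto simp: w_def power_divide add_divide_distrib)
  then have "(\<Sum>i<n. (w i)\<^sup>2) = 1"
    using L False by simp
  moreover have "(\<Sum>i<n. e i * w i) = 0"
    by (subst sum_lessThan_eq_first_two[OF assms]) (auto simp: w_def)
  ultimately show ?thesis by blast
qed

lemma sphere_arc_meets_bdry:
  assumes a: "a \<in> Rn n" and uv: "u \<in> Rn n" "v \<in> Rn n"
    and u: "(\<Sum>i<n. (u i)\<^sup>2) = 1" and v: "(\<Sum>i<n. (v i)\<^sup>2) = 1"
    and not_antipodal: "\<not> (\<forall>i<n. u i = - v i)" and d: "0 < d"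
    and inside: "(\<lambda>i. a i + d * v i) \<in> D" and outside: "(\<lambda>i. a i + d * u i) \<notin> D"
  shows "\<exists>b\<in>bdry n D. distn n a b = d"
proof -
  define w where "w t i = (1 - t) * v i + t * u i" for t :: real and i
  define N where "N t = sqrt (\<Sum>i<n. (w t i)\<^sup>2)" for t
  define \<gamma> where "\<gamma> t = (\<lambda>i. a i + (d / N t) * w t i)" for t
  have N_pos: "0 < N t" if "t \<in> {0..1}" for t
  proof -
    have "N t \<noteq> 0"
      using convex_comb_of_unit_vectors_eq_0[OF u v] not_antipodal that
      by (auto simp: N_def w_def)
    then show ?thesis by (simp add: N_def sum_nonneg order_less_le)
  qed
  have N01: "N 0 = 1" "N 1 = 1" using u v by (simp_all add: N_def w_def)
  have "\<exists>t\<in>{0..1}. \<gamma> t \<in> bdry n D"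
  proof (rule path_meets_bdry)
    show "\<forall>t\<in>{0..1}. \<gamma> t \<in> Rn n" using a uv by (simp add: Rn_def \<gamma>_def w_def)
    show "\<forall>i<n. continuous_on {0..1} (\<lambda>t. \<gamma> t i)"
      using N_pos unfolding \<gamma>_def N_def w_def
      by (intro allI impI continuous_intros) force
    show "\<gamma> 0 \<in> D" "\<gamma> 1 \<notin> D"
      using inside outside N01 by (simp_all add: \<gamma>_def w_def)
  qed
  then obtain t where t: "t \<in> {0..1}" "\<gamma> t \<in> bdry n D" by blast
  have "distn n a (\<gamma> t) = \<bar>d / N t\<bar> * N t"
    unfolding \<gamma>_def N_def by (rule distn_ray)
  also have "\<dots> = d" using N_pos[OF t(1)] d by simp
  finally show ?thesis using t(2) by blast
qed

lemma sphere_meets_bdry_or_contains: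
  assumes n: "2 \<le> n" and a: "a \<in> Rn n" and ue: "u \<in> Rn n" "e \<in> Rn n"
    and u: "(\<Sum>i<n. (u i)\<^sup>2) = 1" and e: "(\<Sum>i<n. (e i)\<^sup>2) = 1" and d: "0 < d"
    and inside: "(\<lambda>i. a i + d * e i) \<in> D"
  shows "(\<exists>b\<in>bdry n D. distn n a b = d) \<or> (\<lambda>i. a i + d * u i) \<in> D"
proof (rule disjCI)
  assume outside: "(\<lambda>i. a i + d * u i) \<notin> D"
  show "\<exists>b\<in>bdry n D. distn n a b = d"
  proof (cases "\<forall>i<n. u i = - e i")
    case False
    then show ?thesis using sphere_arc_meets_bdry[OF a ue u e _ d inside outside] by blast
  next
    case antipodal: True
    (* For u = -e the normalised chord from e to u passes through 0, so go through a unit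
       vector orthogonal to e instead, which exists because n \<ge> 2. *)
    obtain w where w: "w \<in> Rn n" "(\<Sum>i<n. (w i)\<^sup>2) = 1" and ew: "(\<Sum>i<n. e i * w i) = 0"
      using exists_orthogonal_unit_vector[OF n] by blast
    have "\<not> (\<forall>i<n. w i = - e i)"
    proof
      assume "\<forall>i<n. w i = - e i"
      then have "(\<Sum>i<n. e i * w i) = - (\<Sum>i<n. (e i)\<^sup>2)"
        by (simp add: power2_eq_square sum_negf)
      then show False using ew e by simp
    qed
    moreover have "\<not> (\<forall>i<n. u i = - w i)"
    proof
      assume "\<forall>i<n. u i = - w i"
      then have "(\<Sum>i<n. e i * w i) = (\<Sum>i<n. (e i)\<^sup>2)"
        using antipodal by (simp add: power2_eq_square)
      then show False using ew e by simp
    qed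
    ultimately show ?thesis
      using sphere_arc_meets_bdry[OF a w(1) ue(2) w(2) e _ d inside]
        sphere_arc_meets_bdry[OF a ue(1) w(1) u w(2) _ d _ outside]
      by blast
  qed
qed

lemma sum_sq_normalized_diff:
  assumes "distn n x y = r" and "0 < r"
  shows "(\<Sum>i<n. ((y i - x i) / r)\<^sup>2) = 1"
proof -
  have "0 \<le> (\<Sum>i<n. (y i - x i)\<^sup>2)"
    by (simp add: sum_nonneg)
  then have "(\<Sum>i<n. (y i - x i)\<^sup>2) = r\<^sup>2"
    using assms(1) real_sqrt_pow2 by (fastforce simp: distn_def power2_commute)
  then show ?thesis
    using assms(2) by (simp add: power_divide sum_divide_distrib[symmetric])
qed

lemma affine_comb_between:
  fixes x y s :: real
  assumes "0 \<le> s" "s \<le> 1"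
  shows "min x y \<le> x + s * (y - x) \<and> x + s * (y - x) \<le> max x y"
proof (cases "x \<le> y")
  case True
  then have "0 \<le> s * (y - x)" "s * (y - x) \<le> y - x"
    using assms by (auto intro: mult_left_le_one_le)
  then show ?thesis using True by simp
next
  case False
  then have "0 \<le> s * (x - y)" "s * (x - y) \<le> x - y"
    using assms by (auto intro: mult_left_le_one_le)
  then show ?thesis using False by (simp add: algebra_simps)
qed

lemma ray_meets_bdry:
  assumes a: "a \<in> Rn n" and u: "u \<in> Rn n" "(\<Sum>i<n. (u i)\<^sup>2) = 1" and d: "0 < d" "0 < \<rho>"
    and inside: "(\<lambda>i. a i + d * u i) \<in> D" and outside: "(\<lambda>i. a i + \<rho> * u i) \<notin> D"
  shows "\<exists>b\<in>bdry n D. min d \<rho> \<le> distn n a b \<and> distn n a b \<le> max d \<rho>"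
proof -
  define \<gamma> where "\<gamma> s = (\<lambda>i. a i + (d + s * (\<rho> - d)) * u i)" for s :: real
  have "\<exists>s\<in>{0..1}. \<gamma> s \<in> bdry n D"
  proof (rule path_meets_bdry)
    show "\<forall>s\<in>{0..1}. \<gamma> s \<in> Rn n" using a u(1) by (simp add: Rn_def \<gamma>_def)
    show "\<forall>i<n. continuous_on {0..1} (\<lambda>s. \<gamma> s i)"
      unfolding \<gamma>_def by (intro allI impI continuous_intros)
    show "\<gamma> 0 \<in> D" "\<gamma> 1 \<notin> D" using inside outside by (simp_all add: \<gamma>_def)
  qed
  then obtain s where s: "s \<in> {0..1}" "\<gamma> s \<in> bdry n D" by blast
  have "distn n a (\<gamma> s) = \<bar>d + s * (\<rho> - d)\<bar>"
    unfolding \<gamma>_def distn_ray u(2) by simp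
  then have "min d \<rho> \<le> distn n a (\<gamma> s) \<and> distn n a (\<gamma> s) \<le> max d \<rho>"
    using affine_comb_between[of s d \<rho>] s(1) d by auto
  then show ?thesis using s(2) by blast
qed

lemma bdry_point_between:
  assumes n: "2 \<le> n" and a: "a \<in> Rn n" and z: "z \<in> Rn n" "z \<in> D"
    and d: "distn n z a = d" "0 < d" and c: "c \<in> Rn n" "c \<notin> D" "c \<noteq> a"
  shows "\<exists>b\<in>bdry n D. min d (distn n a c) \<le> distn n a b \<and> distn n a b \<le> max d (distn n a c)"
proof -
  define \<rho> where "\<rho> = distn n a c"
  have \<rho>: "0 < \<rho>"
    using distn_eq_0_iff[OF a c(1)] distn_nonneg[of n a c] c(3) by (auto simp: \<rho>_def)
  define u where "u i = (c i - a i) / \<rho>" for i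
  define e where "e i = (z i - a i) / d" for i
  have u1: "(\<Sum>i<n. (u i)\<^sup>2) = 1"
    unfolding u_def by (rule sum_sq_normalized_diff) (use \<rho> in \<open>simp_all add: \<rho>_def\<close>)
  have e1: "(\<Sum>i<n. (e i)\<^sup>2) = 1"
    unfolding e_def by (rule sum_sq_normalized_diff) (use d in \<open>simp_all add: distn_commute\<close>)
  have ue: "u \<in> Rn n" "e \<in> Rn n" using a c(1) z(1) by (simp_all add: u_def e_def Rn_def)
  have "(\<lambda>i. a i + d * e i) = z" "(\<lambda>i. a i + \<rho> * u i) = c"
    using d(2) \<rho> by (simp_all add: e_def u_def)
  then consider (sphere) b where "b \<in> bdry n D" "distn n a b = d"
    | (ray) "(\<lambda>i. a i + d * u i) \<in> D"
    using sphere_meets_bdry_or_contains[OF n a ue u1 e1 d(2)] z(2) by auto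
  then show ?thesis
  proof cases
    case sphere
    then show ?thesis by (intro bexI[of _ b]) auto
  next
    case ray
    then show ?thesis
      using ray_meets_bdry[OF a ue(1) u1 d(2) \<rho>] \<open>(\<lambda>i. a i + \<rho> * u i) = c\<close> c(2)
      by (simp add: \<rho>_def)
  qed
qed

section \<open>The logarithmic estimate\<close>

definition Qfun :: "real \<Rightarrow> real \<Rightarrow> real" where
  "Qfun r s = r * (1 + \<bar>ln (s / r)\<bar>)"

lemma Qfun_le_far:
  assumes d: "0 < d" "d \<le> r" and s: "0 < s" and t: "d \<le> t" "t \<le> 2 * r + s"
  shows "Qfun d t \<le> 3 * Qfun r s"
proof -
  have r: "0 < r" using d by linarith
  define M where "M = ln (2 * r + s) - ln r"
  have M: "0 \<le> M" "M \<le> 2 + \<bar>ln (s / r)\<bar>"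
  proof -
    show "0 \<le> M" using r s by (simp add: M_def)
    have "ln (2 * r + s) \<le> ln 3 + max (ln r) (ln s)"
    proof -
      have "2 * r + s \<le> 3 * max r s" by linarith
      then have "ln (2 * r + s) \<le> ln (3 * max r s)" using r s by simp
      also have "\<dots> = ln 3 + max (ln r) (ln s)" using r s by (simp add: ln_mult max_def)
      finally show ?thesis .
    qed
    moreover have "ln (3 :: real) \<le> 2" using ln_le_minus_one[of 3] by simp
    moreover have "ln (s / r) = ln s - ln r" using r s by (simp add: ln_div)
    ultimately show "M \<le> 2 + \<bar>ln (s / r)\<bar>" unfolding M_def by linarith
  qed
  have "\<bar>ln (t / d)\<bar> = ln t - ln d" using d t by (simp add: ln_div)
  also have "\<dots> \<le> M + (ln r - ln d)" using d t r by (simp add: M_def)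
  finally have log_t: "\<bar>ln (t / d)\<bar> \<le> M + (ln r - ln d)" .
  have "d * ln (r / d) \<le> d * (r / d - 1)"
    using d r by (intro mult_left_mono ln_le_minus_one) auto
  then have log_r: "d * (ln r - ln d) \<le> r - d" using d r by (simp add: ln_div algebra_simps)
  have "Qfun d t \<le> d * (1 + M + (ln r - ln d))"
    unfolding Qfun_def using log_t d by (intro mult_left_mono) auto
  also have "\<dots> = d * (1 + M) + d * (ln r - ln d)" by (simp add: algebra_simps)
  also have "\<dots> \<le> d * (1 + M) + (r - d) * (1 + M)"
  proof -
    have "r - d \<le> (r - d) * (1 + M)" using d M(1) by (simp add: mult_le_cancel_left1)
    then show ?thesis using log_r by linarith
  qed
  also have "\<dots> = r * (1 + M)" by (simp add: algebra_simps)
  also have "\<dots> \<le> r * (3 + \<bar>ln (s / r)\<bar>)" using r M(2) by (intro mult_left_mono) auto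
  also have "\<dots> \<le> 3 * Qfun r s" using r by (simp add: Qfun_def algebra_simps)
  finally show ?thesis .
qed

lemma Qfun_le_near:
  assumes d: "0 < d" "d \<le> r" and s: "0 < s" and t: "s \<le> 2 * t" "t \<le> d"
  shows "Qfun d t \<le> 3 * Qfun r s"
proof -
  have r: "0 < r" and t0: "0 < t" using d s t by linarith+
  have "\<bar>ln (t / d)\<bar> = ln d - ln t" using d t0 t by (simp add: ln_div)
  also have "\<dots> \<le> ln 2 + (ln d - ln s)"
  proof -
    have "ln s \<le> ln (2 * t)" using s t(1) by simp
    moreover have "ln (2 * t) = ln 2 + ln t" using t0 by (simp add: ln_mult)
    ultimately show ?thesis by linarith
  qed
  also have "\<dots> \<le> 1 + (ln d - ln s)" using ln_le_minus_one[of 2] by simp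
  finally have log_t: "\<bar>ln (t / d)\<bar> \<le> 1 + (ln d - ln s)" .
  have Q_ge: "r \<le> Qfun r s" using r by (simp add: Qfun_def)
  show ?thesis
  proof (cases "s \<le> d")
    case True
    have "ln d \<le> ln r" "ln (s / r) = ln s - ln r" using d s by (simp_all add: ln_div)
    then have "ln d - ln s \<le> \<bar>ln (s / r)\<bar>" by linarith
    then have "Qfun d t \<le> d * (2 + \<bar>ln (s / r)\<bar>)"
      unfolding Qfun_def using log_t d by (intro mult_left_mono) auto
    also have "\<dots> \<le> r * (2 + \<bar>ln (s / r)\<bar>)" using d by (intro mult_right_mono) auto
    also have "\<dots> \<le> 3 * Qfun r s"
      using r mult_nonneg_nonneg[of r "\<bar>ln (s / r)\<bar>"] unfolding Qfun_def distrib_left by linarith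
    finally show ?thesis .
  next
    case False
    then have "ln d \<le> ln s" using d by simp
    then have "\<bar>ln (t / d)\<bar> \<le> 1" using log_t by linarith
    then have "Qfun d t \<le> d * 2" unfolding Qfun_def using d by (intro mult_left_mono) auto
    then show ?thesis using d Q_ge by linarith
  qed
qed

lemma Qfun_le_between:
  assumes d: "0 < d" "d \<le> r" and s: "0 < s" and \<rho>: "s \<le> 2 * \<rho>" "\<rho> \<le> 2 * r + s"
    and t: "min d \<rho> \<le> t" "t \<le> max d \<rho>"
  shows "Qfun d t \<le> 3 * Qfun r s"
proof (cases "d \<le> \<rho>")
  case True
  then show ?thesis using Qfun_le_far[OF d s] \<rho> t by simp
next
  case False
  then show ?thesis using Qfun_le_near[OF d s] \<rho> t by simp
qed

section \<open>Comparing the infima\<close>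

lemma Qn_eq_Qfun: "a \<noteq> b \<Longrightarrow> Qn n z a b = ereal (Qfun (distn n z a) (distn n a b))"
  by (simp add: Qn_def Qfun_def)

lemma Qn_ge_distn: "ereal (distn n z a) \<le> Qn n z a b"
  using distn_nonneg[of n z a] by (simp add: Qn_def mult_le_cancel_left1)

lemma exists_far_endpoint:
  assumes "distn n z a0 \<le> distn n z a"
  shows "\<exists>c\<in>{a, b}. distn n a b \<le> 2 * distn n a0 c \<and> distn n a0 c \<le> 2 * distn n z a + distn n a b"
proof -
  have ab: "distn n a b \<le> distn n a0 a + distn n a0 b"
    using distn_triangle[of n a b a0] distn_commute[of n a a0] by linarith
  have a: "distn n a0 a \<le> 2 * distn n z a"
    using distn_triangle[of n a0 a z] distn_commute[of n a0 z] assms by linarith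
  have b: "distn n a0 b \<le> distn n a0 a + distn n a b"
    by (rule distn_triangle)
  show ?thesis
  proof (cases "distn n a0 b \<le> distn n a0 a")
    case True
    with ab a distn_nonneg[of n a b] show ?thesis by (intro bexI[of _ a]) auto
  next
    case False
    with ab a b show ?thesis by (intro bexI[of _ b]) auto
  qed
qed

lemma Qn_nearest_bdry_le:
  assumes n: "2 \<le> n" and D: "openin (topn n) D" and z: "z \<in> D"
    and a0: "a0 \<in> bdry n D" "distn n z a0 = dbd n D z"
    and ab: "a \<in> Rn n - D" "b \<in> Rn n - D"
  shows "\<exists>b'\<in>bdry n D. Qn n z a0 b' \<le> 3 * Qn n z a b"
proof (cases "a = b")
  case True
  then show ?thesis using a0(1) by (auto simp: Qn_def)
next
  case False
  define d r s where "d = dbd n D z" and "r = distn n z a" and "s = distn n a b"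
  have zR: "z \<in> Rn n" using D z openin_subset by fastforce
  have a0R: "a0 \<in> Rn n" using a0(1) bdry_subset_Rn by blast
  have d: "0 < d" "d \<le> r"
    using dbd_pos[OF D z ab(1)] dbd_le_distn[OF D z ab(1)] by (simp_all add: d_def r_def)
  have s: "0 < s"
    using distn_eq_0_iff[of a n b] distn_nonneg[of n a b] ab False by (auto simp: s_def)
  obtain c where c: "c \<in> {a, b}" "s \<le> 2 * distn n a0 c" "distn n a0 c \<le> 2 * r + s"
    using exists_far_endpoint[of n z a0 a b] a0(2) d by (auto simp: d_def r_def s_def)
  have "c \<noteq> a0" using c(2) s by auto
  then obtain b' where b': "b' \<in> bdry n D"
    "min d (distn n a0 c) \<le> distn n a0 b'" "distn n a0 b' \<le> max d (distn n a0 c)"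
    using bdry_point_between[OF n a0R zR z a0(2)[folded d_def] d(1)] c(1) ab by blast
  have "b' \<noteq> a0" using b'(2) d(1) c(2) s by auto
  then have "Qn n z a0 b' = ereal (Qfun d (distn n a0 b'))"
    by (simp add: Qn_eq_Qfun a0(2) d_def)
  also have "\<dots> \<le> ereal (3 * Qfun r s)"
    using Qfun_le_between[OF d s c(2,3) b'(2,3)] by simp
  also have "\<dots> = 3 * Qn n z a b" by (simp add: Qn_eq_Qfun False r_def s_def)
  finally show ?thesis using b'(1) by blast
qed

lemma Inf_le_cmult_Inf:
  fixes A B :: "ereal set"
  assumes "0 < c" and "\<forall>x\<in>A. \<exists>y\<in>B. y \<le> ereal c * x"
  shows "Inf B \<le> ereal c * Inf A"
proof -
  have "ereal c * Inf A = Inf ((*) (ereal c) ` A)"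
    using ereal_Inf_cmult[OF assms(1), of "\<lambda>x. x \<in> A"] by (simp add: setcompr_eq_image)
  also have "Inf B \<le> \<dots>"
    using assms(2) by (auto intro!: Inf_greatest intro: Inf_lower2)
  finally show ?thesis .
qed

lemma ereal_inverse_le_cmult_inverse:
  fixes x y :: ereal
  assumes "0 < c" and "0 < y" and "y \<le> ereal c * x"
  shows "inverse x \<le> ereal c * inverse y"
proof -
  have "0 < ereal c * x" using assms(2,3) by (rule less_le_trans)
  then have "0 < x" using assms(1) by (simp add: ereal_zero_less_0_iff)
  then show ?thesis using assms
    by (cases rule: ereal2_cases[of x y]) (auto simp: field_simps)
qed

definition Qinf ::
    "nat \<Rightarrow> (nat \<Rightarrow> real) \<Rightarrow> (nat \<Rightarrow> real) set \<Rightarrow> (nat \<Rightarrow> real) set \<Rightarrow> ereal" where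
  "Qinf n z A B = Inf {Qn n z a b | a b. a \<in> A \<and> b \<in> B}"

lemma lam_eq_inverse_Qinf:
  "lam n D z = inverse (Qinf n z (Rn n - D) (Rn n - D))"
  "lam' n D z = inverse (Qinf n z (bdry n D) (bdry n D))"
  "lam'' n D z = inverse (Qinf n z {a \<in> bdry n D. distn n z a = dbd n D z} (bdry n D))"
  by (simp_all add: lam_def lam'_def lam''_def Qinf_def conj_ac)

lemma Qinf_antimono: "A \<subseteq> A' \<Longrightarrow> B \<subseteq> B' \<Longrightarrow> Qinf n z A' B' \<le> Qinf n z A B"
  unfolding Qinf_def by (rule Inf_superset_mono) blast

lemma dbd_le_Qinf:
  assumes "openin (topn n) D" "z \<in> D"
  shows "ereal (dbd n D z) \<le> Qinf n z (Rn n - D) B"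
  unfolding Qinf_def
proof (rule Inf_greatest)
  fix x assume "x \<in> {Qn n z a b | a b. a \<in> Rn n - D \<and> b \<in> B}"
  then obtain a b where a: "a \<in> Rn n - D" and x: "x = Qn n z a b" by blast
  have "ereal (dbd n D z) \<le> ereal (distn n z a)" using dbd_le_distn[OF assms a] by simp
  also have "\<dots> \<le> x" unfolding x by (rule Qn_ge_distn)
  finally show "ereal (dbd n D z) \<le> x" .
qed

lemma Qinf_le_cmult_Qinf:
  assumes "0 < c"
    and "\<And>a b. a \<in> A \<Longrightarrow> b \<in> B \<Longrightarrow>
           \<exists>a'\<in>A'. \<exists>b'\<in>B'. Qn n z a' b' \<le> ereal c * Qn n z a b"
  shows "Qinf n z A' B' \<le> ereal c * Qinf n z A B"
  unfolding Qinf_def using assms by (intro Inf_le_cmult_Inf) fastforce+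

lemma Qinf_nearest_le:
  assumes n: "2 \<le> n" and D: "openin (topn n) D" and z: "z \<in> D" and p: "p \<in> Rn n - D"
  shows "Qinf n z {a \<in> bdry n D. distn n z a = dbd n D z} (bdry n D)
           \<le> ereal 3 * Qinf n z (Rn n - D) (Rn n - D)"
proof (rule Qinf_le_cmult_Qinf)
  obtain a0 where a0: "a0 \<in> bdry n D" "distn n z a0 = dbd n D z"
    using dbd_attained[OF D z p] by blast
  fix a b assume "a \<in> Rn n - D" "b \<in> Rn n - D"
  then obtain b' where "b' \<in> bdry n D" "Qn n z a0 b' \<le> 3 * Qn n z a b"
    using Qn_nearest_bdry_le[OF n D z a0] by blast
  then show "\<exists>a'\<in>{a \<in> bdry n D. distn n z a = dbd n D z}. \<exists>b'\<in>bdry n D.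
      Qn n z a' b' \<le> ereal 3 * Qn n z a b"
    using a0 by auto
qed simp

theorem lemma2:
  "\<exists>C0 :: real. C0 > 0 \<and>
     (\<forall>n D z. n \<ge> 2 \<longrightarrow> domain_n n D \<longrightarrow> D \<subseteq> Rn n \<longrightarrow>
        (\<exists>p q. p \<in> Rn n - D \<and> q \<in> Rn n - D \<and> p \<noteq> q) \<longrightarrow> z \<in> D \<longrightarrow>
        lam'' n D z \<le> lam' n D z \<and> lam' n D z \<le> lam n D z \<and>
        lam n D z \<le> ereal C0 * lam'' n D z \<and>
        lam n D z \<le> ereal (1 / dbd n D z))"
proof (intro exI[of _ 3] conjI allI impI)
  fix n D z
  assume n: "2 \<le> n" and dom: "domain_n n D" and "D \<subseteq> Rn n"
    and "\<exists>p q. p \<in> Rn n - D \<and> q \<in> Rn n - D \<and> p \<noteq> q" and z: "z \<in> D"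
  (* One exterior point suffices: if it is the only one, all three infima are \<infinity>. *)
  then obtain p where p: "p \<in> Rn n - D" by blast
  have D: "openin (topn n) D" using dom by (simp add: domain_n_def)
  let ?E = "Rn n - D" and ?B = "bdry n D" and ?N = "{a \<in> bdry n D. distn n z a = dbd n D z}"
  have mono: "Qinf n z ?E ?E \<le> Qinf n z ?B ?B" "Qinf n z ?B ?B \<le> Qinf n z ?N ?B"
    using bdry_subset_compl[OF D] by (auto intro!: Qinf_antimono)
  have d_pos: "0 < dbd n D z" using dbd_pos[OF D z p] .
  then have "0 < ereal (dbd n D z)" by simp
  then have pos: "0 < Qinf n z ?E ?E" using dbd_le_Qinf[OF D z] by (rule less_le_trans)
  show "lam'' n D z \<le> lam' n D z" "lam' n D z \<le> lam n D z"
    unfolding lam_eq_inverse_Qinf using pos mono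
    by (auto intro!: ereal_inverse_antimono intro: order_trans[OF less_imp_le])
  show "lam n D z \<le> ereal 3 * lam'' n D z"
    unfolding lam_eq_inverse_Qinf
    using _ less_le_trans[OF pos order_trans[OF mono]] Qinf_nearest_le[OF n D z p]
    by (rule ereal_inverse_le_cmult_inverse) simp
  have "inverse (Qinf n z ?E ?E) \<le> inverse (ereal (dbd n D z))"
    using d_pos dbd_le_Qinf[OF D z] by (intro ereal_inverse_antimono) auto
  then show "lam n D z \<le> ereal (1 / dbd n D z)"
    unfolding lam_eq_inverse_Qinf using d_pos by (simp add: inverse_eq_divide)
qed simp

end
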